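(* Assume the convex setting described in the context, with optimal value $F^*$. Let $\epsilon>0$ and let $B=\{x:F(x)\le F^*+\epsilon\}$ be such that $B\cap\mathcal X$ is compact and contained in the interior of $\operatorname{dom}F$; let $D$ be the diameter of $B\cap\mathcal X$. Suppose that on $X:=B\cap\mathcal X$: (C2) there is a measurable $\kappa:\Xi\to\mathbb{R}_+$ with $\mathbb{E}[\kappa(\xi)]=L$ such that $f_\xi$ is $\kappa(\xi)$-Lipschitz on $X$ for all $\xi$; (C3) $\mathbb{E}[e^{t\kappa(\xi)}]$ is finite for all $t$ in a neighborhood of $0$; (C4) there is $\sigma>0$ such that $\mathbb{E}[e^{t(f_\xi(x)-F(x))}]\le e^{\sigma^2t^2/2}$ for all $x\in X$ and all $t\in\mathbb{R}$. Then there are constants $\ell$ and $\rho$, not depending on $N$, such that for all $N$ \[\mathbb{P}^N\{F(x^*(\xi^{[N]}))>F^*+\epsilon\}\le\exp(-N\ell)+2\left[\frac{8\rho DL}{\epsilon}\right]^n\exp\left\{-\frac{N\epsilon^2}{128\sigma^2}\right\}.\]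
   Context: Setting: $\mathcal{X}\subseteq\mathbb{R}^n$ is a nonempty closed convex set; $\xi$ is a random vector with support $\Xi$ and distribution $\mathbb P$; for each $\xi\in\Xi$, $f_\xi:\mathbb{R}^n\to\mathbb{R}\cup\{+\infty\}$ is convex; $F(x)=\mathbb{E}[f_\xi(x)]$, with $F>-\infty$ and $F(x)<+\infty$ for some $x\in\mathcal X$; $\operatorname{dom}F=\{x:F(x)<+\infty\}$; the optimal set $\mathcal X^*$ of $\inf_{x\in\mathcal X}F(x)$ is nonempty and compact, and $F^*$ is the optimal value. $\xi^{[N]}$ is an i.i.d. sample of size $N$ with product measure $\mathbb P^N$, $\hat F_N(x)=\frac1N\sum_{i=1}^Nf_{\xi^i}(x)$, and $x^*(\xi^{[N]})$ is an optimal solution of $\inf_{x\in\mathcal X}\hat F_N(x)$ assigned to each sample. *)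

theory Defs
  imports "HOL-Probability.Probability"
begin

definition ext_convex :: "('a::real_vector \<Rightarrow> ereal) \<Rightarrow> bool" where
  "ext_convex g \<longleftrightarrow> (\<forall>x y. \<forall>t::real. 0 \<le> t \<and> t \<le> 1 \<longrightarrow>
      g (t *\<^sub>R x + (1 - t) *\<^sub>R y) \<le> ereal t * g x + ereal (1 - t) * g y)"

definition ereal_expectation :: "'b measure \<Rightarrow> ('b \<Rightarrow> ereal) \<Rightarrow> ereal" where
  "ereal_expectation M g =
     enn2ereal (\<integral>\<^sup>+ w. e2ennreal (g w) \<partial>M) - enn2ereal (\<integral>\<^sup>+ w. e2ennreal (- g w) \<partial>M)"

definition saa_obj :: "('b \<Rightarrow> 'a \<Rightarrow> ereal) \<Rightarrow> nat \<Rightarrow> (nat \<Rightarrow> 'b) \<Rightarrow> 'a \<Rightarrow> ereal" where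
  "saa_obj f N s x = (\<Sum>i<N. f (s i) x) / ereal (real N)"

definition ext_lipschitz_on :: "'a::metric_space set \<Rightarrow> real \<Rightarrow> ('a \<Rightarrow> ereal) \<Rightarrow> bool" where
  "ext_lipschitz_on S k g \<longleftrightarrow> (\<forall>x\<in>S. \<bar>g x\<bar> \<noteq> \<infinity>) \<and>
     (\<forall>x\<in>S. \<forall>y\<in>S. \<bar>real_of_ereal (g x) - real_of_ereal (g y)\<bar> \<le> k * dist x y)"

end

theory Submission
  imports Defs
begin

text \<open>
  Fix an optimal point \<open>x0\<close>. If the SAA minimizer \<open>x\<close> has \<open>F x > F\<^sup>* + \<epsilon>\<close>, the segment from
  \<open>x0\<close> to \<open>x\<close> leaves the sublevel set \<open>S = B \<inter> X\<close> at a point \<open>z\<close> with \<open>F z = F\<^sup>* + \<epsilon>\<close>, and by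
  convexity the sample average at \<open>z\<close> is at most the one at \<open>x0\<close>. Choose a finite \<open>\<delta>\<close>-net of
  the compact set \<open>S\<close> and a net point \<open>c\<close> near \<open>z\<close>. The Lipschitz bounds (random constant
  \<open>\<kappa>\<close> for the samples, \<open>L = E \<kappa>\<close> for \<open>F\<close>) move the comparison from \<open>z\<close> to \<open>c\<close>, so that either the
  sample mean of \<open>\<kappa>\<close> exceeds a threshold \<open>M\<close>, or the sample mean at \<open>x0\<close> overshoots its
  expectation by \<open>\<epsilon>/8\<close>, or the one at some net point undershoots by \<open>\<epsilon>/8\<close>. Chernoff bounds
  make the first event \<open>e\<^sup>-\<^sup>N\<close>-small (finite exponential moment of \<open>\<kappa>\<close>) and each of the others
  \<open>exp(-N\<epsilon>\<^sup>2/(128\<sigma>\<^sup>2))\<close>-small (sub-Gaussian deviations); a union bound over the net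
  concludes, with \<open>\<rho>\<close> absorbing the size of the net.
\<close>

section \<open>Chernoff bounds for sample means\<close>

abbreviation sample_space :: "'b measure \<Rightarrow> nat \<Rightarrow> (nat \<Rightarrow> 'b) measure" where
  "sample_space P N \<equiv> PiM {..<N} (\<lambda>_. P)"

definition sample_mean_ge :: "'b measure \<Rightarrow> nat \<Rightarrow> ('b \<Rightarrow> real) \<Rightarrow> real \<Rightarrow> (nat \<Rightarrow> 'b) set" where
  "sample_mean_ge P N W a = {s \<in> space (sample_space P N). real N * a \<le> (\<Sum>i<N. W (s i))}"

lemma sets_sample_mean_ge [measurable]:
  assumes [measurable]: "W \<in> borel_measurable P"
  shows "sample_mean_ge P N W a \<in> sets (sample_space P N)"
  unfolding sample_mean_ge_def by measurable

lemma space_sample_spaceD: "s \<in> space (sample_space P N) \<Longrightarrow> i < N \<Longrightarrow> s i \<in> space P"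
  by (auto simp: space_PiM)

lemma emeasure_sample_mean_ge_le:
  assumes P: "sigma_finite_measure P" and W[measurable]: "W \<in> borel_measurable P" and t: "t > 0"
  shows "emeasure (sample_space P N) (sample_mean_ge P N W a)
     \<le> ennreal (exp (- t * (real N * a))) * (\<integral>\<^sup>+x. ennreal (exp (t * W x)) \<partial>P) ^ N"
proof -
  interpret sigma_finite_measure P by fact
  interpret product_sigma_finite "\<lambda>_::nat. P"
    by (simp add: product_sigma_finite_def sigma_finite_measure_axioms)
  let ?PN = "sample_space P N" and ?S = "sample_mean_ge P N W a" and ?b = "real N * a"
  have "ennreal (exp (t * ?b)) * emeasure ?PN ?S = (\<integral>\<^sup>+ s. ennreal (exp (t * ?b)) * indicator ?S s \<partial>?PN)"
    by (simp add: nn_integral_cmult_indicator)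
  also have "\<dots> \<le> (\<integral>\<^sup>+ s. ennreal (exp (t * (\<Sum>i<N. W (s i)))) \<partial>?PN)"
  proof (rule nn_integral_mono)
    fix s
    show "ennreal (exp (t * ?b)) * indicator ?S s \<le> ennreal (exp (t * (\<Sum>i<N. W (s i))))"
      using t by (auto simp: sample_mean_ge_def indicator_def intro!: ennreal_leI)
  qed
  also have "\<dots> = (\<integral>\<^sup>+ s. (\<Prod>i<N. ennreal (exp (t * W (s i)))) \<partial>?PN)"
    by (simp add: sum_distrib_left exp_sum prod_ennreal)
  also have "\<dots> = (\<integral>\<^sup>+x. ennreal (exp (t * W x)) \<partial>P) ^ N"
    by (subst product_nn_integral_prod) auto
  finally have "ennreal (exp (t * ?b)) * emeasure ?PN ?S \<le> (\<integral>\<^sup>+x. ennreal (exp (t * W x)) \<partial>P) ^ N" .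
  then have "ennreal (exp (- t * ?b)) * (ennreal (exp (t * ?b)) * emeasure ?PN ?S)
      \<le> ennreal (exp (- t * ?b)) * (\<integral>\<^sup>+x. ennreal (exp (t * W x)) \<partial>P) ^ N"
    by (rule mult_left_mono) simp
  then show ?thesis
    by (simp add: mult.assoc[symmetric] ennreal_mult''[symmetric] exp_add[symmetric])
qed

lemma measure_sample_mean_ge_subgaussian:
  assumes P: "sigma_finite_measure P" and W: "W \<in> borel_measurable P" and \<sigma>: "\<sigma> > 0" and a: "a > 0"
    and mgf: "\<And>t. (\<integral>\<^sup>+x. ennreal (exp (t * W x)) \<partial>P) \<le> ennreal (exp (\<sigma>\<^sup>2 * t\<^sup>2 / 2))"
  shows "measure (sample_space P N) (sample_mean_ge P N W a) \<le> exp (- real N * a\<^sup>2 / (2 * \<sigma>\<^sup>2))"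
proof -
  define t where "t = a / \<sigma>\<^sup>2"
  have t: "t > 0" using \<sigma> a unfolding t_def by simp
  have "emeasure (sample_space P N) (sample_mean_ge P N W a)
     \<le> ennreal (exp (- t * (real N * a))) * (\<integral>\<^sup>+x. ennreal (exp (t * W x)) \<partial>P) ^ N"
    by (rule emeasure_sample_mean_ge_le[OF P W t])
  also have "\<dots> \<le> ennreal (exp (- t * (real N * a))) * ennreal (exp (\<sigma>\<^sup>2 * t\<^sup>2 / 2)) ^ N"
    by (intro mult_left_mono power_mono mgf) simp_all
  also have "\<dots> = ennreal (exp (- t * (real N * a) + real N * (\<sigma>\<^sup>2 * t\<^sup>2 / 2)))"
    by (simp add: ennreal_power ennreal_mult''[symmetric] exp_of_nat_mult[symmetric] mult_exp_exp)
  also have "- t * (real N * a) + real N * (\<sigma>\<^sup>2 * t\<^sup>2 / 2) = - real N * a\<^sup>2 / (2 * \<sigma>\<^sup>2)"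
    using \<sigma> unfolding t_def by (simp add: field_simps power2_eq_square)
  finally have "emeasure (sample_space P N) (sample_mean_ge P N W a)
      \<le> ennreal (exp (- real N * a\<^sup>2 / (2 * \<sigma>\<^sup>2)))" .
  then show ?thesis
    unfolding measure_def by (simp add: enn2real_leI)
qed

lemma exp_moment_imp_sample_mean_tail:
  assumes P: "sigma_finite_measure P" and W: "W \<in> borel_measurable P" and t: "t > 0"
    and mgf: "(\<integral>\<^sup>+x. ennreal (exp (t * W x)) \<partial>P) < \<infinity>"
  obtains M where "M > 0" "\<And>N. measure (sample_space P N) (sample_mean_ge P N W M) \<le> exp (- real N)"
proof
  let ?A = "\<integral>\<^sup>+x. ennreal (exp (t * W x)) \<partial>P"
  define R where "R = max 1 (enn2real ?A)"
  have R: "1 \<le> R" unfolding R_def by simp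
  have A: "?A \<le> ennreal R"
  proof -
    have "?A = ennreal (enn2real ?A)" using mgf by simp
    also have "\<dots> \<le> ennreal R" unfolding R_def by (rule ennreal_leI) simp
    finally show ?thesis .
  qed
  define M where "M = (ln R + 1) / t"
  show "M > 0" using R t unfolding M_def by (simp add: add_nonneg_pos)
  fix N
  have "emeasure (sample_space P N) (sample_mean_ge P N W M)
     \<le> ennreal (exp (- t * (real N * M))) * ?A ^ N"
    by (rule emeasure_sample_mean_ge_le[OF P W t])
  also have "\<dots> \<le> ennreal (exp (- t * (real N * M))) * ennreal R ^ N"
    by (intro mult_left_mono power_mono A) simp_all
  also have "\<dots> = ennreal (exp (- t * (real N * M)) * exp (real N * ln R))"
    using R by (simp add: ennreal_power ennreal_mult''[symmetric] exp_of_nat_mult)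
  also have "\<dots> = ennreal (exp (- t * (real N * M) + real N * ln R))"
    by (simp add: mult_exp_exp)
  also have "- t * (real N * M) + real N * ln R = - real N"
    using t unfolding M_def by (simp add: field_simps)
  finally have "emeasure (sample_space P N) (sample_mean_ge P N W M) \<le> ennreal (exp (- real N))" .
  then show "measure (sample_space P N) (sample_mean_ge P N W M) \<le> exp (- real N)"
    unfolding measure_def by (simp add: enn2real_leI)
qed

section \<open>Expectations of extended-real-valued functions\<close>

lemma ereal_expectation_neq_MInf:
  assumes "(\<integral>\<^sup>+ w. e2ennreal (- g w) \<partial>M) < \<infinity>"
  shows "ereal_expectation M g \<noteq> -\<infinity>"
proof -
  obtain r where "(\<integral>\<^sup>+ w. e2ennreal (- g w) \<partial>M) = ennreal r" "0 \<le> r"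
    using assms by (cases "\<integral>\<^sup>+ w. e2ennreal (- g w) \<partial>M" rule: ennreal_cases) auto
  moreover have "0 \<le> enn2ereal (\<integral>\<^sup>+ w. e2ennreal (g w) \<partial>M)"
    by (rule enn2ereal_nonneg)
  ultimately show ?thesis
    unfolding ereal_expectation_def
    by (cases "enn2ereal (\<integral>\<^sup>+ w. e2ennreal (g w) \<partial>M)") auto
qed

lemma e2ennreal_eq_top_iff: "e2ennreal x = top \<longleftrightarrow> x = \<infinity>"
  by (cases x) (auto simp: e2ennreal_neg)

lemma ereal_expectation_finiteD:
  fixes g :: "'a \<Rightarrow> ereal"
  assumes g[measurable]: "g \<in> borel_measurable M"
    and neg: "(\<integral>\<^sup>+ w. e2ennreal (- g w) \<partial>M) < \<infinity>"
    and fin: "ereal_expectation M g < \<infinity>"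
  shows "AE w in M. \<bar>g w\<bar> \<noteq> \<infinity>"
    and "integrable M (\<lambda>w. real_of_ereal (g w))"
    and "ereal_expectation M g = ereal (\<integral>w. real_of_ereal (g w) \<partial>M)"
proof -
  define p where "p = (\<integral>\<^sup>+ w. e2ennreal (g w) \<partial>M)"
  define q where "q = (\<integral>\<^sup>+ w. e2ennreal (- g w) \<partial>M)"
  have q: "q \<noteq> top" using neg unfolding q_def by auto
  have "enn2ereal p - enn2ereal q < \<infinity>" using fin unfolding ereal_expectation_def p_def q_def .
  then have p: "p \<noteq> top" using q
    by (cases p rule: ennreal_cases; cases q rule: ennreal_cases) auto
  have "AE w in M. e2ennreal (g w) \<noteq> \<infinity>"
    using p unfolding p_def by (intro nn_integral_PInf_AE) auto
  moreover have "AE w in M. e2ennreal (- g w) \<noteq> \<infinity>"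
    using q unfolding q_def by (intro nn_integral_PInf_AE) auto
  ultimately show AE: "AE w in M. \<bar>g w\<bar> \<noteq> \<infinity>"
    by eventually_elim (auto simp: e2ennreal_eq_top_iff)
  have pos: "(\<integral>\<^sup>+ w. ennreal (real_of_ereal (g w)) \<partial>M) = p"
    unfolding p_def by (rule nn_integral_cong_AE, use AE in eventually_elim) auto
  have neg: "(\<integral>\<^sup>+ w. ennreal (- real_of_ereal (g w)) \<partial>M) = q"
    unfolding q_def by (rule nn_integral_cong_AE, use AE in eventually_elim) auto
  show int: "integrable M (\<lambda>w. real_of_ereal (g w))"
    unfolding real_integrable_def using pos neg p q by auto
  show "ereal_expectation M g = ereal (\<integral>w. real_of_ereal (g w) \<partial>M)"
    unfolding ereal_expectation_def real_lebesgue_integral_def[OF int] pos neg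
      p_def[symmetric] q_def[symmetric]
    using p q by (cases p; cases q) auto
qed

lemma ext_convex_real_le:
  assumes "ext_convex g" "0 \<le> t" "t \<le> 1" "\<bar>g x\<bar> \<noteq> \<infinity>" "\<bar>g y\<bar> \<noteq> \<infinity>"
    and "g (t *\<^sub>R x + (1 - t) *\<^sub>R y) \<noteq> -\<infinity>"
  shows "real_of_ereal (g (t *\<^sub>R x + (1 - t) *\<^sub>R y))
    \<le> t * real_of_ereal (g x) + (1 - t) * real_of_ereal (g y)"
proof -
  let ?z = "t *\<^sub>R x + (1 - t) *\<^sub>R y"
  have "g ?z \<le> ereal t * ereal (real_of_ereal (g x)) + ereal (1 - t) * ereal (real_of_ereal (g y))"
    using assms unfolding ext_convex_def by (simp add: ereal_real)
  also have "\<dots> = ereal (t * real_of_ereal (g x) + (1 - t) * real_of_ereal (g y))" by simp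
  finally show ?thesis using assms(6) by (cases "g ?z") auto
qed

lemma convex_on_ereal_expectation:
  fixes f :: "'b \<Rightarrow> 'a::real_vector \<Rightarrow> ereal"
  assumes f_convex: "\<And>\<xi>. \<xi> \<in> space M \<Longrightarrow> ext_convex (f \<xi>)"
    and f_meas: "\<And>x. (\<lambda>\<xi>. f \<xi> x) \<in> borel_measurable M"
    and neg: "\<And>x. (\<integral>\<^sup>+ \<xi>. e2ennreal (- f \<xi> x) \<partial>M) < \<infinity>"
    and U: "convex U" and fin: "\<And>x. x \<in> U \<Longrightarrow> ereal_expectation M (\<lambda>\<xi>. f \<xi> x) < \<infinity>"
  shows "convex_on U (\<lambda>x. real_of_ereal (ereal_expectation M (\<lambda>\<xi>. f \<xi> x)))"
proof (rule convex_onI[OF _ U])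
  fix t :: real and x y assume t: "0 < t" "t < 1" and xy: "x \<in> U" "y \<in> U"
  define w where "w = t *\<^sub>R y + (1 - t) *\<^sub>R x"
  have w_eq: "(1 - t) *\<^sub>R x + t *\<^sub>R y = w" unfolding w_def by (simp add: add.commute)
  have "w \<in> U" using U xy t unfolding w_eq[symmetric] by (simp add: convex_def)
  note fin_AE = ereal_expectation_finiteD[OF f_meas neg fin]
  have "AE \<xi> in M. real_of_ereal (f \<xi> w) \<le> t * real_of_ereal (f \<xi> y) + (1 - t) * real_of_ereal (f \<xi> x)"
    using fin_AE(1)[OF xy(1)] fin_AE(1)[OF xy(2)] fin_AE(1)[OF \<open>w \<in> U\<close>] AE_space
  proof eventually_elim
    case (elim \<xi>)
    then show ?case
      using ext_convex_real_le[OF f_convex, of \<xi> t y x] t unfolding w_def by auto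
  qed
  then have "(\<integral>\<xi>. real_of_ereal (f \<xi> w) \<partial>M)
      \<le> (\<integral>\<xi>. t * real_of_ereal (f \<xi> y) + (1 - t) * real_of_ereal (f \<xi> x) \<partial>M)"
    using fin_AE(2) xy \<open>w \<in> U\<close> by (intro integral_mono_AE) auto
  also have "\<dots> = t * (\<integral>\<xi>. real_of_ereal (f \<xi> y) \<partial>M) + (1 - t) * (\<integral>\<xi>. real_of_ereal (f \<xi> x) \<partial>M)"
    using fin_AE(2) xy by simp
  finally show "real_of_ereal (ereal_expectation M (\<lambda>\<xi>. f \<xi> ((1 - t) *\<^sub>R x + t *\<^sub>R y)))
      \<le> (1 - t) * real_of_ereal (ereal_expectation M (\<lambda>\<xi>. f \<xi> x))
        + t * real_of_ereal (ereal_expectation M (\<lambda>\<xi>. f \<xi> y))"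
    unfolding w_eq using fin_AE(3) xy \<open>w \<in> U\<close> by simp
qed

lemma isCont_ereal_expectation:
  fixes f :: "'b \<Rightarrow> 'a::euclidean_space \<Rightarrow> ereal"
  assumes f_convex: "\<And>\<xi>. \<xi> \<in> space M \<Longrightarrow> ext_convex (f \<xi>)"
    and f_meas: "\<And>x. (\<lambda>\<xi>. f \<xi> x) \<in> borel_measurable M"
    and neg: "\<And>x. (\<integral>\<^sup>+ \<xi>. e2ennreal (- f \<xi> x) \<partial>M) < \<infinity>"
    and y: "y \<in> interior {x. ereal_expectation M (\<lambda>\<xi>. f \<xi> x) < \<infinity>}"
  shows "isCont (\<lambda>x. real_of_ereal (ereal_expectation M (\<lambda>\<xi>. f \<xi> x))) y"
proof -
  obtain r where r: "r > 0" "ball y r \<subseteq> {x. ereal_expectation M (\<lambda>\<xi>. f \<xi> x) < \<infinity>}"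
    using y unfolding mem_interior by blast
  have "convex_on (ball y r) (\<lambda>x. real_of_ereal (ereal_expectation M (\<lambda>\<xi>. f \<xi> x)))"
    using r(2) by (intro convex_on_ereal_expectation[OF f_convex f_meas neg]) auto
  then have "continuous_on (ball y r) (\<lambda>x. real_of_ereal (ereal_expectation M (\<lambda>\<xi>. f \<xi> x)))"
    by (intro convex_on_continuous) auto
  then show ?thesis
    using r(1) continuous_on_eq_continuous_at[OF open_ball] centre_in_ball by blast
qed

lemma ext_lipschitz_onD:
  assumes "ext_lipschitz_on S k g" "x \<in> S" "y \<in> S"
  shows "real_of_ereal (g x) - real_of_ereal (g y) \<le> k * dist x y"
  using assms unfolding ext_lipschitz_on_def by fastforce

lemma ext_lipschitz_on_ereal_expectation:
  fixes f :: "'b \<Rightarrow> 'a::metric_space \<Rightarrow> ereal"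
  assumes lip: "\<And>\<xi>. \<xi> \<in> space M \<Longrightarrow> ext_lipschitz_on S (\<kappa> \<xi>) (f \<xi>)"
    and \<kappa>: "integrable M \<kappa>"
    and f_meas: "\<And>x. (\<lambda>\<xi>. f \<xi> x) \<in> borel_measurable M"
    and neg: "\<And>x. (\<integral>\<^sup>+ \<xi>. e2ennreal (- f \<xi> x) \<partial>M) < \<infinity>"
    and fin: "\<And>x. x \<in> S \<Longrightarrow> ereal_expectation M (\<lambda>\<xi>. f \<xi> x) < \<infinity>"
  shows "ext_lipschitz_on S (\<integral>\<xi>. \<kappa> \<xi> \<partial>M) (\<lambda>x. ereal_expectation M (\<lambda>\<xi>. f \<xi> x))"
  unfolding ext_lipschitz_on_def
proof (intro conjI ballI)
  note E = ereal_expectation_finiteD[OF f_meas neg fin]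
  show "\<bar>ereal_expectation M (\<lambda>\<xi>. f \<xi> x)\<bar> \<noteq> \<infinity>" if "x \<in> S" for x
    using E(3)[OF that] by simp
  fix x y assume xy: "x \<in> S" "y \<in> S"
  have "\<bar>real_of_ereal (ereal_expectation M (\<lambda>\<xi>. f \<xi> x)) - real_of_ereal (ereal_expectation M (\<lambda>\<xi>. f \<xi> y))\<bar>
      = \<bar>\<integral>\<xi>. real_of_ereal (f \<xi> x) - real_of_ereal (f \<xi> y) \<partial>M\<bar>"
    using E(2,3) xy by simp
  also have "\<dots> \<le> (\<integral>\<xi>. \<bar>real_of_ereal (f \<xi> x) - real_of_ereal (f \<xi> y)\<bar> \<partial>M)"
    by (rule integral_abs_bound)
  also have "\<dots> \<le> (\<integral>\<xi>. \<kappa> \<xi> * dist x y \<partial>M)"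
    using E(2) xy \<kappa> lip unfolding ext_lipschitz_on_def by (intro integral_mono) auto
  also have "\<dots> = (\<integral>\<xi>. \<kappa> \<xi> \<partial>M) * dist x y" by simp
  finally show "\<bar>real_of_ereal (ereal_expectation M (\<lambda>\<xi>. f \<xi> x)) - real_of_ereal (ereal_expectation M (\<lambda>\<xi>. f \<xi> y))\<bar>
      \<le> (\<integral>\<xi>. \<kappa> \<xi> \<partial>M) * dist x y" .
qed

section \<open>Sublevel sets and sample average minimizers\<close>

lemma eventually_nhds_ereal_less:
  fixes F :: "'a::t2_space \<Rightarrow> ereal"
  assumes z: "z \<in> interior {x. F x < \<infinity>}" and nminf: "\<And>x. F x \<noteq> -\<infinity>"
    and cont: "isCont (\<lambda>x. real_of_ereal (F x)) z" and less: "F z < ereal c"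
  shows "eventually (\<lambda>x. F x < ereal c) (nhds z)"
proof -
  have "real_of_ereal (F z) < c"
    using less nminf[of z] by (cases "F z") auto
  moreover have "((\<lambda>x. real_of_ereal (F x)) \<longlongrightarrow> real_of_ereal (F z)) (nhds z)"
    using cont tendsto_at_iff_tendsto_nhds[of "\<lambda>x. real_of_ereal (F x)" z] unfolding isCont_def by simp
  ultimately have "eventually (\<lambda>x. real_of_ereal (F x) < c) (nhds z)"
    using order_tendstoD(2) by blast
  moreover have "eventually (\<lambda>x. x \<in> interior {x. F x < \<infinity>}) (nhds z)"
    using z by (intro eventually_nhds_in_open) auto
  ultimately show ?thesis
  proof eventually_elim
    case (elim x)
    then show ?case using interior_subset[of "{x. F x < \<infinity>}"] nminf[of x] by (cases "F x") auto
  qed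
qed

lemma segment_meets_level_set:
  fixes F :: "'a::real_normed_vector \<Rightarrow> ereal"
  assumes X: "convex X" and closed: "closed {x\<in>X. F x \<le> ereal c}"
    and dom: "{x\<in>X. F x \<le> ereal c} \<subseteq> interior {x. F x < \<infinity>}" and nminf: "\<And>x. F x \<noteq> -\<infinity>"
    and cont: "\<And>y. y \<in> X \<Longrightarrow> F y \<le> ereal c \<Longrightarrow> isCont (\<lambda>x. real_of_ereal (F x)) y"
    and x0: "x0 \<in> X" "F x0 \<le> ereal c" and x1: "x1 \<in> X" "F x1 > ereal c"
  obtains t where "0 \<le> t" "t < 1" "F (t *\<^sub>R x1 + (1 - t) *\<^sub>R x0) = ereal c"
proof -
  define p where "p t = t *\<^sub>R x1 + (1 - t) *\<^sub>R x0" for t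
  have p_cont: "continuous (at t) p" for t unfolding p_def by (intro continuous_intros)
  have pX: "p t \<in> X" if "0 \<le> t" "t \<le> 1" for t
    using X x0(1) x1(1) that unfolding p_def convex_def by auto
  define T where "T = {0..1} \<inter> p -` {x\<in>X. F x \<le> ereal c}"
  have "closed T"
    unfolding T_def by (intro closed_Int closed_atLeastAtMost continuous_closed_vimage closed p_cont)
  moreover have "0 \<in> T" using x0 unfolding T_def p_def by simp
  moreover have bdd: "bdd_above T" unfolding T_def by (rule bdd_aboveI[of _ 1]) auto
  ultimately have "Sup T \<in> T" using closed_contains_Sup by blast
  define ts where "ts = Sup T"
  have ts: "0 \<le> ts" "ts \<le> 1" "p ts \<in> X" "F (p ts) \<le> ereal c"
    using \<open>Sup T \<in> T\<close> unfolding ts_def T_def by auto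
  have "ts \<noteq> 1" using ts x1(2) unfolding p_def by auto
  with ts have "ts < 1" by simp
  have "\<not> F (p ts) < ereal c"
  proof
    assume "F (p ts) < ereal c"
    then have "eventually (\<lambda>y. F y < ereal c) (nhds (p ts))"
      using dom ts by (intro eventually_nhds_ereal_less nminf cont) auto
    moreover have "filterlim p (nhds (p ts)) (at_right ts)"
      using p_cont[of ts] by (simp add: continuous_at filterlim_at_split)
    ultimately have "eventually (\<lambda>t. F (p t) < ereal c) (at_right ts)"
      by (rule eventually_compose_filterlim)
    moreover have "eventually (\<lambda>t. ts < t \<and> t < 1) (at_right ts)"
      unfolding eventually_at_right_field using \<open>ts < 1\<close> by blast
    ultimately have "eventually (\<lambda>t. F (p t) < ereal c \<and> ts < t \<and> t < 1) (at_right ts)"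
      by eventually_elim auto
    then obtain t where t: "F (p t) < ereal c" "ts < t" "t < 1"
      using eventually_happens[of _ "at_right ts"] by auto
    then have "t \<in> T" using pX[of t] ts unfolding T_def by auto
    then show False using t(2) cSup_upper[OF _ bdd] unfolding ts_def by fastforce
  qed
  with ts have "F (p ts) = ereal c" by simp
  with ts \<open>ts < 1\<close> show ?thesis using that unfolding p_def by blast
qed

lemma sum_ext_convex_segment_le:
  assumes convex: "\<And>i. i < N \<Longrightarrow> ext_convex (g i)" and t: "0 \<le> t" "t \<le> 1"
    and fin: "\<And>i. i < N \<Longrightarrow> \<bar>g i x1\<bar> \<noteq> \<infinity>" "\<And>i. i < N \<Longrightarrow> \<bar>g i x0\<bar> \<noteq> \<infinity>"
    and nminf: "\<And>i. i < N \<Longrightarrow> g i (t *\<^sub>R x1 + (1 - t) *\<^sub>R x0) \<noteq> -\<infinity>"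
    and le: "(\<Sum>i<N. real_of_ereal (g i x1)) \<le> (\<Sum>i<N. real_of_ereal (g i x0))"
  shows "(\<Sum>i<N. real_of_ereal (g i (t *\<^sub>R x1 + (1 - t) *\<^sub>R x0))) \<le> (\<Sum>i<N. real_of_ereal (g i x0))"
proof -
  have "(\<Sum>i<N. real_of_ereal (g i (t *\<^sub>R x1 + (1 - t) *\<^sub>R x0)))
      \<le> (\<Sum>i<N. t * real_of_ereal (g i x1) + (1 - t) * real_of_ereal (g i x0))"
    using ext_convex_real_le[OF convex t _ _ nminf] fin by (intro sum_mono) auto
  also have "\<dots> = t * (\<Sum>i<N. real_of_ereal (g i x1)) + (1 - t) * (\<Sum>i<N. real_of_ereal (g i x0))"
    by (simp add: sum.distrib sum_distrib_left)
  also have "\<dots> \<le> (\<Sum>i<N. real_of_ereal (g i x0))"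
    using mult_left_mono[OF le t(1)] by (simp add: algebra_simps)
  finally show ?thesis .
qed

lemma saa_obj_eq_ereal:
  assumes "\<And>i. i < N \<Longrightarrow> \<bar>f (s i) x\<bar> \<noteq> \<infinity>"
  shows "saa_obj f N s x = ereal ((\<Sum>i<N. real_of_ereal (f (s i) x)) / real N)"
proof -
  have "(\<Sum>i<N. f (s i) x) = (\<Sum>i<N. ereal (real_of_ereal (f (s i) x)))"
    using assms by (intro sum.cong) (auto simp: ereal_real)
  then show ?thesis unfolding saa_obj_def by (cases "N = 0") auto
qed

lemma saa_minimizer_sum_le:
  assumes N: "N \<ge> 1" and le: "saa_obj f N s x1 \<le> saa_obj f N s x0"
    and fin: "\<And>i. i < N \<Longrightarrow> \<bar>f (s i) x0\<bar> \<noteq> \<infinity>"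
    and nminf: "\<And>i. i < N \<Longrightarrow> f (s i) x1 \<noteq> -\<infinity>"
  shows "\<And>i. i < N \<Longrightarrow> \<bar>f (s i) x1\<bar> \<noteq> \<infinity>"
    and "(\<Sum>i<N. real_of_ereal (f (s i) x1)) \<le> (\<Sum>i<N. real_of_ereal (f (s i) x0))"
proof -
  show fin1: "\<bar>f (s i) x1\<bar> \<noteq> \<infinity>" if "i < N" for i
  proof
    assume "\<bar>f (s i) x1\<bar> = \<infinity>"
    with nminf that have "(\<Sum>i<N. f (s i) x1) = \<infinity>" by (auto simp: sum_Pinfty)
    then have "saa_obj f N s x1 = \<infinity>" using N unfolding saa_obj_def by simp
    with le show False using saa_obj_eq_ereal[of N f s x0, OF fin] by simp
  qed
  have "(\<Sum>i<N. real_of_ereal (f (s i) x1)) / real N \<le> (\<Sum>i<N. real_of_ereal (f (s i) x0)) / real N"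
    using le by (simp add: saa_obj_eq_ereal[of N f s x0, OF fin] saa_obj_eq_ereal[of N f s x1, OF fin1])
  then show "(\<Sum>i<N. real_of_ereal (f (s i) x1)) \<le> (\<Sum>i<N. real_of_ereal (f (s i) x0))"
    using N by (simp add: divide_le_cancel)
qed

text \<open>
  Here \<open>g \<xi>\<close> and \<open>G\<close> play the sample and the expected objective, \<open>z\<close> a point at level
  \<open>G x0 + \<epsilon>\<close> that beats \<open>x0\<close> on the sample, and \<open>y\<close> a net point within \<open>\<delta>\<close> of \<open>z\<close>.
\<close>

lemma sample_deviation_cases:
  fixes g :: "'b \<Rightarrow> 'a::metric_space \<Rightarrow> real" and G :: "'a \<Rightarrow> real"
  assumes near: "dist y z \<le> \<delta>"
    and g_lip: "\<And>i. i < N \<Longrightarrow> g (s i) y - g (s i) z \<le> \<kappa> (s i) * dist y z"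
    and \<kappa>: "\<And>i. i < N \<Longrightarrow> 0 \<le> \<kappa> (s i)"
    and G_lip: "G z - G y \<le> L * dist y z" and L: "0 \<le> L"
    and level: "G z = G x0 + \<epsilon>" and \<epsilon>: "0 \<le> \<epsilon>"
    and sample: "(\<Sum>i<N. g (s i) z) \<le> (\<Sum>i<N. g (s i) x0)"
    and \<delta>: "\<delta> * (M + L) = \<epsilon> / 4"
  shows "real N * M \<le> (\<Sum>i<N. \<kappa> (s i))
    \<or> real N * (\<epsilon> / 8) \<le> (\<Sum>i<N. G y - g (s i) y)
    \<or> real N * (\<epsilon> / 8) \<le> (\<Sum>i<N. g (s i) x0 - G x0)"
proof (rule disjCI)
  assume "\<not> (real N * (\<epsilon> / 8) \<le> (\<Sum>i<N. G y - g (s i) y) \<or> real N * (\<epsilon> / 8) \<le> (\<Sum>i<N. g (s i) x0 - G x0))"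
  then have small: "(\<Sum>i<N. G y - g (s i) y) + (\<Sum>i<N. g (s i) x0 - G x0) < real N * (\<epsilon> / 4)"
    by linarith
  show "real N * M \<le> (\<Sum>i<N. \<kappa> (s i))"
  proof (rule ccontr)
    assume "\<not> real N * M \<le> (\<Sum>i<N. \<kappa> (s i))"
    then have "dist y z * (\<Sum>i<N. \<kappa> (s i)) \<le> \<delta> * (real N * M)"
      using near \<kappa> order_trans[OF zero_le_dist near] by (intro mult_mono sum_nonneg) auto
    moreover have "(\<Sum>i<N. g (s i) y) \<le> (\<Sum>i<N. g (s i) z + \<kappa> (s i) * dist y z)"
      using g_lip by (intro sum_mono) fastforce
    moreover have "(\<Sum>i<N. g (s i) z + \<kappa> (s i) * dist y z) = (\<Sum>i<N. g (s i) z) + dist y z * (\<Sum>i<N. \<kappa> (s i))"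
      by (simp add: sum.distrib sum_distrib_left mult.commute)
    moreover have "real N * (G x0 + \<epsilon> - L * \<delta>) \<le> real N * G y"
      using G_lip level mult_left_mono[OF near L] by (intro mult_left_mono) auto
    ultimately have "real N * \<epsilon> - real N * (\<delta> * (M + L)) \<le> (\<Sum>i<N. G y - g (s i) y) + (\<Sum>i<N. g (s i) x0 - G x0)"
      using sample by (simp add: sum_subtractf algebra_simps)
    moreover have "real N * (\<delta> * (M + L)) = real N * \<epsilon> / 4" unfolding \<delta> by simp
    moreover have "0 \<le> real N * \<epsilon>" using \<epsilon> by simp
    ultimately show False using small by linarith
  qed
qed

section \<open>The sample average approximation setting\<close>

locale saa_setting = prob_space P for P :: "'xi measure" +
  fixes f :: "'xi \<Rightarrow> 'a::euclidean_space \<Rightarrow> ereal"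
    and X :: "'a set"
    and xstar :: "nat \<Rightarrow> (nat \<Rightarrow> 'xi) \<Rightarrow> 'a"
    and \<kappa> :: "'xi \<Rightarrow> real"
    and \<epsilon> \<sigma> :: real
    and F :: "'a \<Rightarrow> ereal" and Fstar :: ereal and B :: "'a set"
  assumes F_def: "F = (\<lambda>x. ereal_expectation P (\<lambda>\<xi>. f \<xi> x))"
    and Fstar_def: "Fstar = (INF x\<in>X. F x)"
    and B_def: "B = {x. F x \<le> Fstar + ereal \<epsilon>}"
    and X_convex: "convex X"
    and f_convex: "\<And>\<xi>. \<xi> \<in> space P \<Longrightarrow> ext_convex (f \<xi>)"
    and f_not_MInf: "\<And>\<xi> x. \<xi> \<in> space P \<Longrightarrow> f \<xi> x \<noteq> -\<infinity>"
    and f_meas: "\<And>x. (\<lambda>\<xi>. f \<xi> x) \<in> borel_measurable P"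
    and f_neg_part: "\<And>x. (\<integral>\<^sup>+ \<xi>. e2ennreal (- f \<xi> x) \<partial>P) < \<infinity>"
    and F_finite_somewhere: "\<exists>x\<in>X. F x < \<infinity>"
    and opt_ex: "\<exists>x\<in>X. F x = Fstar"
    and xstar_opt: "\<And>N s y. N \<ge> 1 \<Longrightarrow> s \<in> space (sample_space P N) \<Longrightarrow> y \<in> X \<Longrightarrow>
        xstar N s \<in> X \<and> saa_obj f N s (xstar N s) \<le> saa_obj f N s y"
    and eps_pos: "\<epsilon> > 0"
    and sublevel_compact: "compact (B \<inter> X)"
    and sublevel_interior: "B \<inter> X \<subseteq> interior {x. F x < \<infinity>}"
    and kappa_meas: "\<kappa> \<in> borel_measurable P"
    and kappa_nonneg: "\<And>\<xi>. \<xi> \<in> space P \<Longrightarrow> \<kappa> \<xi> \<ge> 0"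
    and kappa_integrable: "integrable P \<kappa>"
    and f_lipschitz: "\<And>\<xi>. \<xi> \<in> space P \<Longrightarrow> ext_lipschitz_on (B \<inter> X) (\<kappa> \<xi>) (f \<xi>)"
    and kappa_exp_moment: "\<exists>\<delta>>0. \<forall>t. \<bar>t\<bar> < \<delta> \<longrightarrow> (\<integral>\<^sup>+ \<xi>. ennreal (exp (t * \<kappa> \<xi>)) \<partial>P) < \<infinity>"
    and sigma_pos: "\<sigma> > 0"
    and f_subgaussian: "\<And>x t. x \<in> B \<inter> X \<Longrightarrow>
        (\<integral>\<^sup>+ \<xi>. ennreal (exp (t * (real_of_ereal (f \<xi> x) - real_of_ereal (F x)))) \<partial>P)
          \<le> ennreal (exp (\<sigma>\<^sup>2 * t\<^sup>2 / 2))"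
begin

lemma F_neq_MInf: "F x \<noteq> -\<infinity>"
  unfolding F_def by (rule ereal_expectation_neq_MInf[OF f_neg_part])

lemma Fstar_finite: "\<bar>Fstar\<bar> \<noteq> \<infinity>"
proof -
  obtain x1 where "x1 \<in> X" "F x1 < \<infinity>" using F_finite_somewhere by blast
  moreover have "Fstar \<le> F x1" unfolding Fstar_def using \<open>x1 \<in> X\<close> by (rule INF_lower)
  moreover obtain x0 where "F x0 = Fstar" using opt_ex by blast
  ultimately show ?thesis using F_neq_MInf[of x0] by auto
qed

lemma F_less_PInf: "x \<in> B \<inter> X \<Longrightarrow> F x < \<infinity>"
  using Fstar_finite unfolding B_def by (cases Fstar) auto

lemma f_finite: "\<xi> \<in> space P \<Longrightarrow> x \<in> B \<inter> X \<Longrightarrow> \<bar>f \<xi> x\<bar> \<noteq> \<infinity>"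
  using f_lipschitz unfolding ext_lipschitz_on_def by simp

lemma F_lipschitz: "ext_lipschitz_on (B \<inter> X) (expectation \<kappa>) F"
  unfolding F_def
  by (rule ext_lipschitz_on_ereal_expectation[OF f_lipschitz kappa_integrable f_meas f_neg_part])
    (use F_less_PInf in \<open>auto simp: F_def\<close>)

lemma F_isCont: "x \<in> B \<inter> X \<Longrightarrow> isCont (\<lambda>x. real_of_ereal (F x)) x"
  unfolding F_def
  by (rule isCont_ereal_expectation[OF f_convex f_meas f_neg_part])
    (use sublevel_interior in \<open>auto simp: F_def\<close>)

lemma Fstar_plus_eps: "Fstar + ereal \<epsilon> = ereal (real_of_ereal Fstar + \<epsilon>)"
  using Fstar_finite by (cases Fstar) auto

lemma optimum_in_sublevel: "x0 \<in> X \<Longrightarrow> F x0 = Fstar \<Longrightarrow> x0 \<in> B \<inter> X"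
  using eps_pos Fstar_finite unfolding B_def by (cases Fstar) auto

lemma level_point_below_sample_optimum:
  assumes N: "N \<ge> 1" and s: "s \<in> space (sample_space P N)" and x0: "x0 \<in> X" "F x0 = Fstar"
    and excess: "F (xstar N s) > Fstar + ereal \<epsilon>"
  obtains z where "z \<in> B \<inter> X" "F z = Fstar + ereal \<epsilon>"
    "(\<Sum>i<N. real_of_ereal (f (s i) z)) \<le> (\<Sum>i<N. real_of_ereal (f (s i) x0))"
proof -
  define c where "c = real_of_ereal Fstar + \<epsilon>"
  have sublevel: "B \<inter> X = {x\<in>X. F x \<le> ereal c}"
    unfolding B_def c_def Fstar_plus_eps by auto
  have si: "s i \<in> space P" if "i < N" for i using space_sample_spaceD[OF s that] .
  have x0B: "x0 \<in> B \<inter> X" using optimum_in_sublevel[OF x0] .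
  define xh where "xh = xstar N s"
  have xh: "xh \<in> X" "saa_obj f N s xh \<le> saa_obj f N s x0"
    using xstar_opt[OF N s x0(1)] unfolding xh_def by auto
  have fin0: "\<And>i. i < N \<Longrightarrow> \<bar>f (s i) x0\<bar> \<noteq> \<infinity>" by (rule f_finite[OF si x0B])
  have nminf: "\<And>i x. i < N \<Longrightarrow> f (s i) x \<noteq> -\<infinity>" by (rule f_not_MInf[OF si])
  have fin_h: "\<bar>f (s i) xh\<bar> \<noteq> \<infinity>" if "i < N" for i
    by (rule saa_minimizer_sum_le(1)[of N f s xh x0]) (use N xh(2) fin0 nminf that in auto)
  have sum_h: "(\<Sum>i<N. real_of_ereal (f (s i) xh)) \<le> (\<Sum>i<N. real_of_ereal (f (s i) x0))"
    by (rule saa_minimizer_sum_le(2)[of N f s xh x0]) (use N xh(2) fin0 nminf in auto)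
  obtain t where t: "0 \<le> t" "t < 1" and level: "F (t *\<^sub>R xh + (1 - t) *\<^sub>R x0) = ereal c"
  proof (rule segment_meets_level_set[OF X_convex _ _ F_neq_MInf F_isCont, of c x0 xh])
    show "closed {x\<in>X. F x \<le> ereal c}"
      using compact_imp_closed[OF sublevel_compact] unfolding sublevel .
    show "F xh > ereal c" using excess unfolding xh_def c_def Fstar_plus_eps .
  qed (use sublevel_interior x0 x0B xh(1) in \<open>auto simp: sublevel\<close>)
  have "t *\<^sub>R xh + (1 - t) *\<^sub>R x0 \<in> X" using X_convex xh(1) x0(1) t unfolding convex_def by auto
  with level have "t *\<^sub>R xh + (1 - t) *\<^sub>R x0 \<in> B \<inter> X" unfolding sublevel by simp
  moreover have "(\<Sum>i<N. real_of_ereal (f (s i) (t *\<^sub>R xh + (1 - t) *\<^sub>R x0)))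
      \<le> (\<Sum>i<N. real_of_ereal (f (s i) x0))"
    using t by (intro sum_ext_convex_segment_le f_convex si fin_h fin0 nminf sum_h) auto
  ultimately show ?thesis
    using that level unfolding c_def Fstar_plus_eps by blast
qed

lemma expectation_kappa_nonneg: "0 \<le> expectation \<kappa>"
  using kappa_nonneg by (simp add: integral_nonneg)

lemma excess_event_subset:
  assumes N: "N \<ge> 1" and x0: "x0 \<in> X" "F x0 = Fstar"
    and net: "C \<subseteq> B \<inter> X" "B \<inter> X \<subseteq> (\<Union>c\<in>C. ball c \<delta>)"
    and \<delta>: "\<delta> * (M + expectation \<kappa>) = \<epsilon> / 4"
  shows "{s\<in>space (sample_space P N). F (xstar N s) > Fstar + ereal \<epsilon>}
    \<subseteq> sample_mean_ge P N \<kappa> M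
      \<union> sample_mean_ge P N (\<lambda>\<xi>. real_of_ereal (f \<xi> x0) - real_of_ereal (F x0)) (\<epsilon> / 8)
      \<union> (\<Union>c\<in>C. sample_mean_ge P N (\<lambda>\<xi>. real_of_ereal (F c) - real_of_ereal (f \<xi> c)) (\<epsilon> / 8))"
proof
  fix s assume "s \<in> {s\<in>space (sample_space P N). F (xstar N s) > Fstar + ereal \<epsilon>}"
  then have s: "s \<in> space (sample_space P N)" and excess: "F (xstar N s) > Fstar + ereal \<epsilon>" by auto
  have si: "s i \<in> space P" if "i < N" for i using space_sample_spaceD[OF s that] .
  obtain z where z: "z \<in> B \<inter> X" "F z = Fstar + ereal \<epsilon>"
    "(\<Sum>i<N. real_of_ereal (f (s i) z)) \<le> (\<Sum>i<N. real_of_ereal (f (s i) x0))"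
    using level_point_below_sample_optimum[OF N s x0 excess] by blast
  obtain c where c: "c \<in> C" "dist c z < \<delta>" using net(2) z(1) by auto
  with net(1) have cB: "c \<in> B \<inter> X" by blast
  have "real N * M \<le> (\<Sum>i<N. \<kappa> (s i))
    \<or> real N * (\<epsilon> / 8) \<le> (\<Sum>i<N. real_of_ereal (F c) - real_of_ereal (f (s i) c))
    \<or> real N * (\<epsilon> / 8) \<le> (\<Sum>i<N. real_of_ereal (f (s i) x0) - real_of_ereal (F x0))"
  proof (rule sample_deviation_cases[where g = "\<lambda>\<xi> x. real_of_ereal (f \<xi> x)" and z = z])
    show "real_of_ereal (f (s i) c) - real_of_ereal (f (s i) z) \<le> \<kappa> (s i) * dist c z" if "i < N" for i
      using ext_lipschitz_onD[OF f_lipschitz[OF si[OF that]] cB z(1)] .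
    show "real_of_ereal (F z) - real_of_ereal (F c) \<le> expectation \<kappa> * dist c z"
      using ext_lipschitz_onD[OF F_lipschitz z(1) cB] by (simp add: dist_commute)
    show "real_of_ereal (F z) = real_of_ereal (F x0) + \<epsilon>"
      using z(2) x0(2) unfolding Fstar_plus_eps by simp
  qed (use c(2) z(3) kappa_nonneg si expectation_kappa_nonneg eps_pos \<delta> in auto)
  then show "s \<in> sample_mean_ge P N \<kappa> M
      \<union> sample_mean_ge P N (\<lambda>\<xi>. real_of_ereal (f \<xi> x0) - real_of_ereal (F x0)) (\<epsilon> / 8)
      \<union> (\<Union>c\<in>C. sample_mean_ge P N (\<lambda>\<xi>. real_of_ereal (F c) - real_of_ereal (f \<xi> c)) (\<epsilon> / 8))"
    using s c(1) unfolding sample_mean_ge_def by auto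
qed

lemma sample_mean_deviation_tails:
  assumes x: "x \<in> B \<inter> X"
  shows "measure (sample_space P N)
      (sample_mean_ge P N (\<lambda>\<xi>. real_of_ereal (f \<xi> x) - real_of_ereal (F x)) (\<epsilon> / 8))
      \<le> exp (- real N * \<epsilon>\<^sup>2 / (128 * \<sigma>\<^sup>2))"
    and "measure (sample_space P N)
      (sample_mean_ge P N (\<lambda>\<xi>. real_of_ereal (F x) - real_of_ereal (f \<xi> x)) (\<epsilon> / 8))
      \<le> exp (- real N * \<epsilon>\<^sup>2 / (128 * \<sigma>\<^sup>2))"
proof -
  have [measurable]: "(\<lambda>\<xi>. f \<xi> x) \<in> borel_measurable P" by (rule f_meas)
  have rate: "- real N * (\<epsilon> / 8)\<^sup>2 / (2 * \<sigma>\<^sup>2) = - real N * \<epsilon>\<^sup>2 / (128 * \<sigma>\<^sup>2)"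
    by (simp add: power_divide)
  have "measure (sample_space P N)
      (sample_mean_ge P N (\<lambda>\<xi>. real_of_ereal (f \<xi> x) - real_of_ereal (F x)) (\<epsilon> / 8))
      \<le> exp (- real N * (\<epsilon> / 8)\<^sup>2 / (2 * \<sigma>\<^sup>2))"
    by (rule measure_sample_mean_ge_subgaussian[OF sigma_finite_measure_axioms _ sigma_pos _ f_subgaussian[OF x]])
      (use eps_pos in auto)
  then show "measure (sample_space P N)
      (sample_mean_ge P N (\<lambda>\<xi>. real_of_ereal (f \<xi> x) - real_of_ereal (F x)) (\<epsilon> / 8))
      \<le> exp (- real N * \<epsilon>\<^sup>2 / (128 * \<sigma>\<^sup>2))"
    unfolding rate .
  have "(\<integral>\<^sup>+\<xi>. ennreal (exp (t * (real_of_ereal (F x) - real_of_ereal (f \<xi> x)))) \<partial>P)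
      \<le> ennreal (exp (\<sigma>\<^sup>2 * t\<^sup>2 / 2))" for t
    using f_subgaussian[OF x, of "- t"] by (simp add: algebra_simps)
  then have "measure (sample_space P N)
      (sample_mean_ge P N (\<lambda>\<xi>. real_of_ereal (F x) - real_of_ereal (f \<xi> x)) (\<epsilon> / 8))
      \<le> exp (- real N * (\<epsilon> / 8)\<^sup>2 / (2 * \<sigma>\<^sup>2))"
    by (intro measure_sample_mean_ge_subgaussian[OF sigma_finite_measure_axioms _ sigma_pos]) (use eps_pos in auto)
  then show "measure (sample_space P N)
      (sample_mean_ge P N (\<lambda>\<xi>. real_of_ereal (F x) - real_of_ereal (f \<xi> x)) (\<epsilon> / 8))
      \<le> exp (- real N * \<epsilon>\<^sup>2 / (128 * \<sigma>\<^sup>2))"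
    unfolding rate .
qed

lemma excess_probability_le_net:
  assumes N: "N \<ge> 1" and x0: "x0 \<in> X" "F x0 = Fstar"
    and net: "finite C" "C \<subseteq> B \<inter> X" "B \<inter> X \<subseteq> (\<Union>c\<in>C. ball c \<delta>)"
    and \<delta>: "\<delta> * (M + expectation \<kappa>) = \<epsilon> / 4"
    and M: "\<And>N. measure (sample_space P N) (sample_mean_ge P N \<kappa> M) \<le> exp (- real N)"
  shows "measure (sample_space P N) {s\<in>space (sample_space P N). F (xstar N s) > Fstar + ereal \<epsilon>}
    \<le> exp (- real N) + (real (card C) + 1) * exp (- real N * \<epsilon>\<^sup>2 / (128 * \<sigma>\<^sup>2))"
proof -
  interpret PN: prob_space "sample_space P N" by (rule prob_space_PiM) (rule prob_space_axioms)
  have [measurable]: "(\<lambda>\<xi>. f \<xi> x) \<in> borel_measurable P" for x by (rule f_meas)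
  let ?V = "\<lambda>\<xi>. real_of_ereal (f \<xi> x0) - real_of_ereal (F x0)"
  let ?U = "\<lambda>c \<xi>. real_of_ereal (F c) - real_of_ereal (f \<xi> c)"
  have meas_V: "?V \<in> borel_measurable P" by measurable
  have meas_U: "?U c \<in> borel_measurable P" for c by measurable
  let ?r = "exp (- real N * \<epsilon>\<^sup>2 / (128 * \<sigma>\<^sup>2))"
  have x0B: "x0 \<in> B \<inter> X" using optimum_in_sublevel[OF x0] .
  let ?A0 = "sample_mean_ge P N \<kappa> M" and ?A1 = "sample_mean_ge P N ?V (\<epsilon> / 8)"
    and ?A2 = "\<lambda>c. sample_mean_ge P N (?U c) (\<epsilon> / 8)"
  have sets: "?A0 \<in> sets (sample_space P N)" "?A1 \<in> sets (sample_space P N)"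
    "?A2 c \<in> sets (sample_space P N)" for c
    by (rule sets_sample_mean_ge[OF kappa_meas] sets_sample_mean_ge[OF meas_V] sets_sample_mean_ge[OF meas_U])+
  then have sets_UN: "(\<Union>c\<in>C. ?A2 c) \<in> sets (sample_space P N)"
    by (intro sets.finite_UN net(1))
  note sets = sets sets_UN
  have "measure (sample_space P N) {s\<in>space (sample_space P N). F (xstar N s) > Fstar + ereal \<epsilon>}
      \<le> measure (sample_space P N) (?A0 \<union> ?A1 \<union> (\<Union>c\<in>C. ?A2 c))"
    using sets by (intro PN.finite_measure_mono excess_event_subset[OF N x0 net(2,3) \<delta>]) auto
  also have "\<dots> \<le> measure (sample_space P N) (?A0 \<union> ?A1) + measure (sample_space P N) (\<Union>c\<in>C. ?A2 c)"
    using sets by (intro measure_Un_le) auto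
  also have "\<dots> \<le> measure (sample_space P N) ?A0 + measure (sample_space P N) ?A1
      + (\<Sum>c\<in>C. measure (sample_space P N) (?A2 c))"
    using sets net(1) by (intro add_mono measure_Un_le measure_UNION_le) auto
  also have "\<dots> \<le> exp (- real N) + ?r + (\<Sum>c\<in>C. ?r)"
    using net(2) by (intro add_mono sum_mono M sample_mean_deviation_tails x0B) auto
  also have "\<dots> = exp (- real N) + (real (card C) + 1) * ?r"
    by (simp add: algebra_simps)
  finally show ?thesis .
qed

lemma eps_le_lipschitz_diameter:
  assumes z: "z \<in> B \<inter> X" "F z = Fstar + ereal \<epsilon>" and x0: "x0 \<in> X" "F x0 = Fstar"
  shows "\<epsilon> \<le> expectation \<kappa> * diameter (B \<inter> X)"
proof -
  have x0B: "x0 \<in> B \<inter> X" using optimum_in_sublevel[OF x0] .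
  have "\<epsilon> = real_of_ereal (F z) - real_of_ereal (F x0)"
    using z(2) x0(2) unfolding Fstar_plus_eps by simp
  also have "\<dots> \<le> expectation \<kappa> * dist z x0" by (rule ext_lipschitz_onD[OF F_lipschitz z(1) x0B])
  also have "\<dots> \<le> expectation \<kappa> * diameter (B \<inter> X)"
    using diameter_bounded_bound[OF compact_imp_bounded[OF sublevel_compact] z(1) x0B]
    by (intro mult_left_mono expectation_kappa_nonneg)
  finally show ?thesis .
qed

lemma excess_event_empty:
  assumes "\<not> (\<exists>z\<in>B \<inter> X. F z = Fstar + ereal \<epsilon>)" and N: "N \<ge> 1"
  shows "{s\<in>space (sample_space P N). F (xstar N s) > Fstar + ereal \<epsilon>} = {}"
proof -
  obtain x0 where x0: "x0 \<in> X" "F x0 = Fstar" using opt_ex by blast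
  show ?thesis using level_point_below_sample_optimum[OF N _ x0] assms(1) by blast
qed

lemma excess_probability_bound_level_point:
  assumes z: "z \<in> B \<inter> X" "F z = Fstar + ereal \<epsilon>"
  shows "\<exists>\<rho>>0. \<forall>N\<ge>1.
     measure (sample_space P N) {s\<in>space (sample_space P N). F (xstar N s) > Fstar + ereal \<epsilon>}
     \<le> exp (- real N) + 2 * (8 * \<rho> * diameter (B \<inter> X) * expectation \<kappa> / \<epsilon>) ^ DIM('a)
        * exp (- real N * \<epsilon>\<^sup>2 / (128 * \<sigma>\<^sup>2))"
proof -
  let ?D = "diameter (B \<inter> X)" and ?L = "expectation \<kappa>"
  obtain x0 where x0: "x0 \<in> X" "F x0 = Fstar" using opt_ex by blast
  have "\<epsilon> \<le> ?L * ?D" by (rule eps_le_lipschitz_diameter[OF z x0])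
  moreover have "0 \<le> ?D" by (rule diameter_ge_0[OF compact_imp_bounded[OF sublevel_compact]])
  ultimately have L: "?L > 0" and D: "?D > 0"
    using eps_pos expectation_kappa_nonneg by (auto simp: zero_less_mult_iff order.order_iff_strict)
  obtain t0 where t0: "t0 > 0"
    and mgf: "\<forall>t. \<bar>t\<bar> < t0 \<longrightarrow> (\<integral>\<^sup>+ \<xi>. ennreal (exp (t * \<kappa> \<xi>)) \<partial>P) < \<infinity>"
    using kappa_exp_moment by blast
  then have "t0 / 2 > 0" "(\<integral>\<^sup>+ \<xi>. ennreal (exp (t0 / 2 * \<kappa> \<xi>)) \<partial>P) < \<infinity>"
    using mgf[rule_format, of "t0 / 2"] by simp_all
  then obtain M where M: "M > 0" "\<And>N. measure (sample_space P N) (sample_mean_ge P N \<kappa> M) \<le> exp (- real N)"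
    using exp_moment_imp_sample_mean_tail[OF sigma_finite_measure_axioms kappa_meas] by blast
  define \<delta> where "\<delta> = \<epsilon> / (4 * (M + ?L))"
  have \<delta>: "\<delta> > 0" "\<delta> * (M + ?L) = \<epsilon> / 4"
    using M(1) L eps_pos unfolding \<delta>_def by (simp_all add: field_simps)
  obtain C where C: "C \<subseteq> B \<inter> X" "finite C" "B \<inter> X \<subseteq> (\<Union>c\<in>C. ball c \<delta>)"
    using compactE_image[OF sublevel_compact, of "B \<inter> X" "\<lambda>c. ball c \<delta>"] \<delta>(1) by force
  define \<rho> where "\<rho> = (real (card C) + 1) * \<epsilon> / (8 * ?D * ?L)"
  have "8 * \<rho> * ?D * ?L / \<epsilon> = real (card C) + 1"
    using eps_pos D L unfolding \<rho>_def by (simp add: field_simps)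
  then have size: "real (card C) + 1 \<le> 2 * (8 * \<rho> * ?D * ?L / \<epsilon>) ^ DIM('a)"
    using self_le_power[of "real (card C) + 1" "DIM('a)"] by simp
  have "\<rho> > 0" using eps_pos D L unfolding \<rho>_def by simp
  moreover have "measure (sample_space P N) {s\<in>space (sample_space P N). F (xstar N s) > Fstar + ereal \<epsilon>}
      \<le> exp (- real N) + 2 * (8 * \<rho> * ?D * ?L / \<epsilon>) ^ DIM('a) * exp (- real N * \<epsilon>\<^sup>2 / (128 * \<sigma>\<^sup>2))"
    if N: "N \<ge> 1" for N
    using excess_probability_le_net[OF N x0 C(2,1,3) \<delta>(2) M(2)] mult_right_mono[OF size exp_ge_zero[of "- real N * \<epsilon>\<^sup>2 / (128 * \<sigma>\<^sup>2)"]]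
    by linarith
  ultimately show ?thesis by blast
qed

lemma excess_probability_bound:
  "\<exists>ell>0. \<exists>\<rho>>0. \<forall>N\<ge>1.
     measure (sample_space P N) {s\<in>space (sample_space P N). F (xstar N s) > Fstar + ereal \<epsilon>}
     \<le> exp (- real N * ell) + 2 * (8 * \<rho> * diameter (B \<inter> X) * expectation \<kappa> / \<epsilon>) ^ DIM('a)
        * exp (- real N * \<epsilon>\<^sup>2 / (128 * \<sigma>\<^sup>2))"
proof (cases "\<exists>z\<in>B \<inter> X. F z = Fstar + ereal \<epsilon>")
  case True
  then show ?thesis using excess_probability_bound_level_point by (intro exI[of _ 1]) auto
next
  case False
  let ?rhs = "\<lambda>N. exp (- real N * 1) + 2 * (8 * 1 * diameter (B \<inter> X) * expectation \<kappa> / \<epsilon>) ^ DIM('a)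
      * exp (- real N * \<epsilon>\<^sup>2 / (128 * \<sigma>\<^sup>2))"
  have "0 \<le> diameter (B \<inter> X)" by (rule diameter_ge_0[OF compact_imp_bounded[OF sublevel_compact]])
  then have "0 \<le> ?rhs N" for N
    using expectation_kappa_nonneg eps_pos by (intro add_nonneg_nonneg mult_nonneg_nonneg) auto
  then have "measure (sample_space P N) {s\<in>space (sample_space P N). F (xstar N s) > Fstar + ereal \<epsilon>}
      \<le> ?rhs N" if "N \<ge> 1" for N
    unfolding excess_event_empty[OF False that] by simp
  then show ?thesis by (intro exI[of _ 1] conjI) auto
qed

end

theorem corollary3p4:
  fixes P :: "'xi measure"
    and f :: "'xi \<Rightarrow> real ^ 'n \<Rightarrow> ereal"
    and \<X> :: "(real ^ 'n) set"
    and xstar :: "nat \<Rightarrow> (nat \<Rightarrow> 'xi) \<Rightarrow> real ^ 'n"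
    and \<kappa> :: "'xi \<Rightarrow> real"
    and \<epsilon> \<sigma> :: real
  defines "F \<equiv> (\<lambda>x. ereal_expectation P (\<lambda>\<xi>. f \<xi> x))"
  defines "Fstar \<equiv> (INF x\<in>\<X>. F x)"
  defines "B \<equiv> {x. F x \<le> Fstar + ereal \<epsilon>}"
  defines "D \<equiv> diameter (B \<inter> \<X>)"
  defines "L \<equiv> (\<integral>\<xi>. \<kappa> \<xi> \<partial>P)"
  assumes P: "prob_space P"
    and X_closed: "closed \<X>" and X_convex: "convex \<X>" and X_ne: "\<X> \<noteq> {}"
    and f_convex: "\<forall>\<xi>\<in>space P. ext_convex (f \<xi>)"
    and f_not_minf: "\<forall>\<xi>\<in>space P. \<forall>x. f \<xi> x \<noteq> -\<infinity>"
    and f_meas: "\<forall>x. (\<lambda>\<xi>. f \<xi> x) \<in> borel_measurable P"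
    and F_well_def: "\<forall>x. (\<integral>\<^sup>+ \<xi>. e2ennreal (- f \<xi> x) \<partial>P) < \<infinity>"
    and F_finite_somewhere: "\<exists>x\<in>\<X>. F x < \<infinity>"
    and opt_ne: "{x\<in>\<X>. F x = Fstar} \<noteq> {}"
    and opt_compact: "compact {x\<in>\<X>. F x = Fstar}"
    and xstar_opt: "\<forall>N\<ge>1. \<forall>s\<in>space (PiM {..<N} (\<lambda>_. P)).
        xstar N s \<in> \<X> \<and> (\<forall>y\<in>\<X>. saa_obj f N s (xstar N s) \<le> saa_obj f N s y)"
    and event_meas: "\<forall>N\<ge>1. {s\<in>space (PiM {..<N} (\<lambda>_. P)). F (xstar N s) > Fstar + ereal \<epsilon>}
        \<in> sets (PiM {..<N} (\<lambda>_. P))"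
    and eps_pos: "\<epsilon> > 0"
    and BX_compact: "compact (B \<inter> \<X>)"
    and BX_interior: "B \<inter> \<X> \<subseteq> interior {x. F x < \<infinity>}"
    and kappa_meas: "\<kappa> \<in> borel_measurable P"
    and kappa_nonneg: "\<forall>\<xi>\<in>space P. \<kappa> \<xi> \<ge> 0"
    and kappa_integrable: "integrable P \<kappa>"
    and C2: "\<forall>\<xi>\<in>space P. ext_lipschitz_on (B \<inter> \<X>) (\<kappa> \<xi>) (f \<xi>)"
    and C3: "\<exists>\<delta>>0. \<forall>t. \<bar>t\<bar> < \<delta> \<longrightarrow>
        (\<integral>\<^sup>+ \<xi>. ennreal (exp (t * \<kappa> \<xi>)) \<partial>P) < \<infinity>"
    and sigma_pos: "\<sigma> > 0"
    and C4: "\<forall>x\<in>B \<inter> \<X>. \<forall>t::real.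
        (\<integral>\<^sup>+ \<xi>. ennreal (exp (t * (real_of_ereal (f \<xi> x) - real_of_ereal (F x)))) \<partial>P)
          \<le> ennreal (exp (\<sigma>\<^sup>2 * t\<^sup>2 / 2))"
  shows "\<exists>ell>0. \<exists>\<rho>>0. \<forall>N\<ge>(1::nat).
     measure (PiM {..<N} (\<lambda>_. P))
       {s\<in>space (PiM {..<N} (\<lambda>_. P)). F (xstar N s) > Fstar + ereal \<epsilon>}
     \<le> exp (- real N * ell)
        + 2 * (8 * \<rho> * D * L / \<epsilon>) ^ CARD('n) * exp (- real N * \<epsilon>\<^sup>2 / (128 * \<sigma>\<^sup>2))"
proof -
  interpret saa_setting P f \<X> xstar \<kappa> \<epsilon> \<sigma> F Fstar B
  proof (intro saa_setting.intro saa_setting_axioms.intro P)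
    show "F = (\<lambda>x. ereal_expectation P (\<lambda>\<xi>. f \<xi> x))" "Fstar = (INF x\<in>\<X>. F x)"
      "B = {x. F x \<le> Fstar + ereal \<epsilon>}"
      by (simp_all add: F_def Fstar_def B_def)
  qed (use assms in blast)+
  show ?thesis
    using excess_probability_bound unfolding D_def L_def by simp
qed

end
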